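(* Let $d,a,b$ be positive integers, $r=(d+2b)/d$, $R=(a+d)/d$, with $R\ge3r$; let $\Phi$ and $x_0<r<x_1$ be as in the context. Let $x\in(1,\infty)$. (i) If $x\in[x_0,x_1]$, there is a unique $y_x\ge0$ with $x+iy_x\ne r$ and $\Phi(x+iy_x)=0$; moreover $\Phi(x+iy)>0$ for $0<y<y_x$ and $\Phi(x+iy)<0$ for $y>y_x$. (ii) If $x\notin[x_0,x_1]$, then $\Phi(x+iy)<0$ for every $y\ge0$.
   Context: For $t\in\mathbb C\setminus\{\pm1,\pm r\}$ let $\Phi(t)=d\log|t+r|-d\log|t-r|+(a+d)(\log|t-1|-\log|t+1|)$. Under $R\ge3r$, there is a unique $x_0\in(1,r)$ and a unique $x_1\in(r,\infty)$ with $\Phi(x_0)=\Phi(x_1)=0$. *)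

theory Defs
  imports Complex_Main
begin

definition Phi :: "real \<Rightarrow> real \<Rightarrow> real \<Rightarrow> complex \<Rightarrow> real" where
  "Phi d a r t = d * ln (cmod (t + of_real r)) - d * ln (cmod (t - of_real r))
     + (a + d) * (ln (cmod (t - 1)) - ln (cmod (t + 1)))"

end

theory Submission
  imports Defs
begin

(* Writing t = x + iy with s = y^2, we have 2 Phi(t) = Psi x s, where
     Psi x s = d ln((x+r)^2+s) - d ln((x-r)^2+s) + A (ln((x-1)^2+s) - ln((x+1)^2+s)),
   A = a + d = R d.  Both relevant one-variable restrictions of Psi -- the real axis
   x |-> Psi x 0 on (r,oo) and each vertical line s |-> Psi x s -- are "valleys":
   their derivative, once nonnegative, stays positive, and they are eventually
   negative.  Such a function is strictly decreasing wherever it is still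
   nonnegative, so it has at most one zero, is positive before it and negative after
   it (locale valley).  On (1,r) the real restriction is increasing.  Hence on the real
   axis Psi x 0 >= 0 exactly for x in [x0,x1]; for such x the vertical line starts
   nonnegative (at x = r it is positive for small s > 0), so it has a unique zero
   t >= 0 and y_x = sqrt t; for other x it starts negative and stays negative.
   The derivative signs reduce to the signs of explicit polynomials, monotone
   because R > r, and eventual negativity follows from ln u <= u - 1 and R >= 3r. *)

section \<open>Functions with a single valley that are eventually negative\<close>

locale valley =
  fixes h h' :: "real \<Rightarrow> real" and a B :: real
  assumes has_deriv: "\<And>s. a < s \<Longrightarrow> (h has_real_derivative h' s) (at s)"
    and deriv_single_crossing: "\<And>s t. a < s \<Longrightarrow> s < t \<Longrightarrow> h' s \<ge> 0 \<Longrightarrow> h' t > 0"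
    and eventually_neg: "\<And>s. s \<ge> B \<Longrightarrow> h s < 0"
begin

text \<open>Left of a point where \<open>h\<close> is nonnegative the derivative is negative: otherwise \<open>h\<close>
  would increase from there on and could never become negative.\<close>
lemma deriv_neg_before_nonneg:
  assumes "a < s" "s \<le> t" "h t \<ge> 0"
  shows "h' s < 0"
proof (rule ccontr)
  assume "\<not> h' s < 0"
  define u where "u = max B (t + 1)"
  have "h u < 0" "t < u" using eventually_neg u_def by auto
  then obtain z where z: "t < z" "z < u" "h u - h t = (u - t) * h' z"
    using MVT2[of t u h h'] has_deriv assms by force
  have "h' z > 0" using deriv_single_crossing[of s z] \<open>\<not> h' s < 0\<close> z assms by linarith
  with z \<open>t < u\<close> have "h u - h t > 0" by simp
  with \<open>h u < 0\<close> assms(3) show False by linarith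
qed

lemma decreasing_to_nonneg:
  assumes "a < s" "s < t" "h t \<ge> 0"
  shows "h s > h t"
proof -
  obtain z where z: "s < z" "z < t" "h t - h s = (t - s) * h' z"
    using MVT2[of s t h h'] has_deriv assms by force
  have "h' z < 0" using deriv_neg_before_nonneg[of z t] z assms by linarith
  with assms(2) have "(t - s) * h' z < 0" by (simp add: mult_pos_neg)
  with z show ?thesis by linarith
qed

lemma neg_after_nonpos:
  assumes "a < s" "s < t" "h s \<le> 0"
  shows "h t < 0"
  using decreasing_to_nonneg[OF assms(1,2)] assms(3) by force

lemma pos_before_zero:
  assumes "a < s" "s < t" "h t = 0"
  shows "h s > 0"
  using decreasing_to_nonneg[OF assms(1,2)] assms(3) by simp

lemma zero_unique:
  assumes "a < s" "a < t" "h s = 0" "h t = 0"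
  shows "s = t"
  using pos_before_zero[of s t] pos_before_zero[of t s] assms by fastforce

lemma zero_after_nonneg:
  assumes "a < p" "h p \<ge> 0"
  obtains t where "p \<le> t" "h t = 0"
proof -
  define u where "u = max B (p + 1)"
  have "h u < 0" "p \<le> u" using eventually_neg u_def by auto
  have "continuous_on {p..u} h"
    using has_deriv assms(1)
    by (intro continuous_at_imp_continuous_on ballI) (meson DERIV_isCont atLeastAtMost_iff less_le_trans)
  then obtain t where "p \<le> t" "t \<le> u" "h t = 0"
    using IVT2'[of h u 0 p] \<open>h u < 0\<close> \<open>p \<le> u\<close> assms(2) by force
  then show ?thesis using that by blast
qed

lemma square_profile:
  assumes "a \<le> 0" "a < t" "0 \<le> t" "h t = 0"
  shows "\<forall>y\<ge>0. a < y\<^sup>2 \<and> h (y\<^sup>2) = 0 \<longrightarrow> y = sqrt t"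
    and "\<forall>y. 0 < y \<and> y < sqrt t \<longrightarrow> h (y\<^sup>2) > 0"
    and "\<forall>y. sqrt t < y \<longrightarrow> h (y\<^sup>2) < 0"
proof -
  show "\<forall>y\<ge>0. a < y\<^sup>2 \<and> h (y\<^sup>2) = 0 \<longrightarrow> y = sqrt t"
  proof (intro allI impI)
    fix y :: real assume "0 \<le> y" and y: "a < y\<^sup>2 \<and> h (y\<^sup>2) = 0"
    then have "y\<^sup>2 = t" using zero_unique[of "y\<^sup>2" t] assms by auto
    with \<open>0 \<le> y\<close> show "y = sqrt t" by (metis abs_of_nonneg real_sqrt_abs)
  qed
  show "\<forall>y. 0 < y \<and> y < sqrt t \<longrightarrow> h (y\<^sup>2) > 0"
  proof (intro allI impI)
    fix y :: real assume y: "0 < y \<and> y < sqrt t"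
    then have "y\<^sup>2 < (sqrt t)\<^sup>2" by (intro power_strict_mono) auto
    moreover have "a < y\<^sup>2" using assms(1) y by (smt (verit) zero_less_power)
    ultimately show "h (y\<^sup>2) > 0" using pos_before_zero[of "y\<^sup>2" t] assms by auto
  qed
  show "\<forall>y. sqrt t < y \<longrightarrow> h (y\<^sup>2) < 0"
  proof (intro allI impI)
    fix y :: real assume "sqrt t < y"
    then have "(sqrt t)\<^sup>2 < y\<^sup>2" using assms(3) by (intro power_strict_mono) auto
    then show "h (y\<^sup>2) < 0" using neg_after_nonpos[of t "y\<^sup>2"] assms by auto
  qed
qed

end

section \<open>The function \<open>Phi\<close> in the variables \<open>x\<close> and \<open>s = y\<^sup>2\<close>\<close>

text \<open>\<open>Psi d A r x s\<close> is \<open>2 Phi(x + iy)\<close> written in \<open>s = y\<^sup>2\<close> (see \<open>Phi_eq_Psi\<close>); it is smooth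
  in \<open>s\<close> wherever the four squared distances stay positive.\<close>
definition Psi :: "real \<Rightarrow> real \<Rightarrow> real \<Rightarrow> real \<Rightarrow> real \<Rightarrow> real" where
  "Psi d A r x s = d * ln ((x+r)\<^sup>2 + s) - d * ln ((x-r)\<^sup>2 + s)
     + A * (ln ((x-1)\<^sup>2 + s) - ln ((x+1)\<^sup>2 + s))"

definition Psi_ds :: "real \<Rightarrow> real \<Rightarrow> real \<Rightarrow> real \<Rightarrow> real \<Rightarrow> real" where
  "Psi_ds d A r x s = d / ((x+r)\<^sup>2 + s) - d / ((x-r)\<^sup>2 + s)
     + A * (1 / ((x-1)\<^sup>2 + s) - 1 / ((x+1)\<^sup>2 + s))"

definition Psi_dx :: "real \<Rightarrow> real \<Rightarrow> real \<Rightarrow> real \<Rightarrow> real" where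
  "Psi_dx d A r x = 2 * d / (x + r) - 2 * d / (x - r) + A * (2 / (x - 1) - 2 / (x + 1))"

text \<open>Since \<open>ln |t| = ln (|t|\<^sup>2) / 2\<close>, \<open>Phi\<close> on the vertical line through \<open>x\<close> is \<open>Psi\<close> at \<open>s = y\<^sup>2\<close>.\<close>
lemma Phi_eq_Psi: "Phi d a r (Complex x y) = Psi d (a + d) r x (y\<^sup>2) / 2"
proof -
  have ln_norm: "ln (cmod (Complex u v)) = ln (u\<^sup>2 + v\<^sup>2) / 2" for u v
    by (simp add: complex_norm ln_sqrt)
  have "Complex x y + complex_of_real r = Complex (x + r) y"
    "Complex x y - complex_of_real r = Complex (x - r) y"
    "Complex x y - 1 = Complex (x - 1) y" "Complex x y + 1 = Complex (x + 1) y"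
    by (simp_all add: complex_eq_iff)
  note shifts = this
  show ?thesis unfolding Phi_def Psi_def shifts ln_norm by (simp add: field_simps)
qed

lemma Psi_has_deriv_s:
  assumes "(x-r)\<^sup>2 + s > 0" "(x-1)\<^sup>2 + s > 0" "(x+r)\<^sup>2 + s > 0" "(x+1)\<^sup>2 + s > 0"
  shows "(Psi d A r x has_real_derivative Psi_ds d A r x s) (at s)"
  unfolding Psi_def[abs_def] Psi_ds_def using assms by (auto intro!: derivative_eq_intros)

text \<open>Chain rule for \<open>ln (g\<^sup>2)\<close>, used to differentiate \<open>Psi\<close> in \<open>x\<close> across sign changes of \<open>x - r\<close>.\<close>
lemma DERIV_ln_square:
  fixes g :: "real \<Rightarrow> real"
  assumes "(g has_real_derivative g') (at x)" "g x \<noteq> 0"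
  shows "((\<lambda>x. ln ((g x)\<^sup>2)) has_real_derivative 2 * g' / g x) (at x)"
proof -
  have "((\<lambda>x. ln ((g x)\<^sup>2)) has_real_derivative (1 / (g x)\<^sup>2) * (2 * g x * g')) (at x)"
    by (rule DERIV_chain2[OF DERIV_ln_divide]) (use assms in \<open>auto intro!: derivative_eq_intros\<close>)
  then show ?thesis using assms(2) by (simp add: power2_eq_square)
qed

lemma Psi_has_deriv_x:
  assumes "x > 1" "x \<noteq> r" "r > 1"
  shows "((\<lambda>x. Psi d A r x 0) has_real_derivative Psi_dx d A r x) (at x)"
proof -
  have "x + r \<noteq> 0" "x - r \<noteq> 0" "x - 1 \<noteq> 0" "x + 1 \<noteq> 0" using assms by auto
  then have "((\<lambda>x. d * ln ((x+r)\<^sup>2) - d * ln ((x-r)\<^sup>2) + A * (ln ((x-1)\<^sup>2) - ln ((x+1)\<^sup>2)))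
      has_real_derivative d * (2 * 1 / (x+r)) - d * (2 * 1 / (x-r))
        + A * (2 * 1 / (x-1) - 2 * 1 / (x+1))) (at x)"
    by (intro DERIV_add DERIV_diff DERIV_cmult DERIV_ln_square) (auto intro!: derivative_eq_intros)
  then show ?thesis unfolding Psi_def Psi_dx_def by (simp add: mult.commute)
qed

lemma ln_diff_le:
  fixes p q :: real
  assumes "p > 0" "q > 0"
  shows "ln p - ln q \<le> (p - q) / q"
proof -
  have "ln p - ln q = ln (p / q)" using assms by (simp add: ln_div)
  also have "\<dots> \<le> p / q - 1" using assms by (intro ln_le_minus_one) simp
  finally show ?thesis using assms by (simp add: field_simps)
qed

text \<open>Upper bound for \<open>Psi\<close> from \<open>ln u \<le> u - 1\<close>; it shows \<open>Psi < 0\<close> as soon as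
  \<open>r ((x+1)\<^sup>2 + s) < R ((x-r)\<^sup>2 + s)\<close>, the source of eventual negativity.\<close>
lemma Psi_neg_far:
  assumes "(x-r)\<^sup>2 + s > 0" "(x-1)\<^sup>2 + s > 0" "(x+r)\<^sup>2 + s > 0" "(x+1)\<^sup>2 + s > 0"
    and "d > 0" "R > 0" "A = R * d" "x > 0"
    and far: "r * ((x+1)\<^sup>2 + s) < R * ((x-r)\<^sup>2 + s)"
  shows "Psi d A r x s < 0"
proof -
  define p1 p2 p3 p4 where "p1 = (x+r)\<^sup>2 + s" and "p2 = (x-r)\<^sup>2 + s"
    and "p3 = (x-1)\<^sup>2 + s" and "p4 = (x+1)\<^sup>2 + s"
  have pos: "p1 > 0" "p2 > 0" "p3 > 0" "p4 > 0" using assms unfolding p1_def p2_def p3_def p4_def by auto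
  have "A \<ge> 0" using assms(5-7) by simp
  have "ln p1 - ln p2 \<le> 4*r*x / p2" using ln_diff_le[of p1 p2] pos
    unfolding p1_def p2_def by (simp add: power2_eq_square algebra_simps)
  moreover have "ln p3 - ln p4 \<le> - (4*x / p4)" using ln_diff_le[of p3 p4] pos
    unfolding p3_def p4_def by (simp add: power2_eq_square algebra_simps)
  ultimately have "d * (ln p1 - ln p2) + A * (ln p3 - ln p4) \<le> d * (4*r*x / p2) + A * (- (4*x / p4))"
    using \<open>d > 0\<close> \<open>A \<ge> 0\<close> by (intro add_mono mult_left_mono) auto
  moreover have "Psi d A r x s = d * (ln p1 - ln p2) + A * (ln p3 - ln p4)"
    unfolding Psi_def p1_def p2_def p3_def p4_def by (simp add: algebra_simps)
  ultimately have "Psi d A r x s \<le> d * (4*r*x / p2) + A * (- (4*x / p4))" by simp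
  also have "\<dots> = 4*x*d * (r * p4 - R * p2) / (p2 * p4)"
    using pos \<open>A = R * d\<close> by (simp add: field_simps)
  also have "\<dots> < 0" using pos far assms(5,8) unfolding p2_def p4_def
    by (intro divide_neg_pos mult_pos_neg) auto
  finally show ?thesis .
qed

section \<open>Vertical lines: \<open>s \<mapsto> Psi x s\<close> is a valley\<close>

text \<open>Up to a positive factor, \<open>Psi_ds\<close> is the quadratic \<open>vertical_poly\<close> in \<open>s\<close>.\<close>
definition vertical_poly :: "real \<Rightarrow> real \<Rightarrow> real \<Rightarrow> real \<Rightarrow> real" where
  "vertical_poly R r x s = R * ((x+r)\<^sup>2 + s) * ((x-r)\<^sup>2 + s) - r * ((x-1)\<^sup>2 + s) * ((x+1)\<^sup>2 + s)"

lemma Psi_ds_factor: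
  assumes "(x-r)\<^sup>2 + s > 0" "(x-1)\<^sup>2 + s > 0" "(x+r)\<^sup>2 + s > 0" "(x+1)\<^sup>2 + s > 0"
    and "A = R * d"
  shows "Psi_ds d A r x s = 4*x*d * vertical_poly R r x s
           / (((x+r)\<^sup>2 + s) * ((x-r)\<^sup>2 + s) * ((x-1)\<^sup>2 + s) * ((x+1)\<^sup>2 + s))"
proof -
  define p2 p3 where "p2 = (x-r)\<^sup>2 + s" and "p3 = (x-1)\<^sup>2 + s"
  have shift: "(x+r)\<^sup>2 + s = p2 + 4*r*x" "(x+1)\<^sup>2 + s = p3 + 4*x"
    unfolding p2_def p3_def by (simp_all add: power2_eq_square algebra_simps)
  have "p2 > 0" "p3 > 0" using assms unfolding p2_def p3_def by auto
  moreover have "p2 + 4*r*x \<noteq> 0" "p3 + 4*x \<noteq> 0" using assms(3,4) unfolding shift by auto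
  ultimately show ?thesis
    unfolding Psi_ds_def vertical_poly_def shift p2_def[symmetric] p3_def[symmetric] \<open>A = R * d\<close>
    by (simp add: divide_simps) (simp add: algebra_simps)
qed


text \<open>Because \<open>R > r\<close>, the quadratic is strictly increasing for \<open>s > -(x-1)\<^sup>2\<close>.\<close>
lemma vertical_poly_increasing:
  assumes "r > 1" "R > r" "x > 1" "s > - ((x-1)\<^sup>2)" "s < t"
  shows "vertical_poly R r x s < vertical_poly R r x t"
proof -
  have diff: "vertical_poly R r x t - vertical_poly R r x s
      = (t - s) * ((R - r) * (t + s + 2*x\<^sup>2) + 2*r*(R*r - 1))"
    unfolding vertical_poly_def by (simp add: algebra_simps power2_eq_square)
  have "2*x\<^sup>2 - 2*(x-1)\<^sup>2 > 0" using assms(3) by (simp add: power2_eq_square algebra_simps)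
  then have "t + s + 2*x\<^sup>2 > 0" using assms(4,5) by linarith
  moreover have "R*r - 1 > 0" using assms(1,2) less_1_mult[of R r] by linarith
  ultimately have "(R - r) * (t + s + 2*x\<^sup>2) + 2*r*(R*r - 1) > 0"
    using assms(1,2) by (simp add: add_pos_pos)
  with assms(5) show ?thesis using diff by (smt (verit) mult_pos_pos)
qed

lemma Psi_vertical_valley:
  assumes "d > 0" "r > 1" "R > r" "A = R * d" "x > 1"
    and "a \<ge> - ((x-1)\<^sup>2)" "a \<ge> - ((x-r)\<^sup>2)"
  shows "valley (Psi d A r x) (Psi_ds d A r x) a (r * (x+1)\<^sup>2 / (R - r) + 1)"
proof -
  have pos: "(x-r)\<^sup>2 + s > 0" "(x-1)\<^sup>2 + s > 0" "(x+r)\<^sup>2 + s > 0" "(x+1)\<^sup>2 + s > 0"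
    if "s > a" for s
  proof -
    show "(x-r)\<^sup>2 + s > 0" "(x-1)\<^sup>2 + s > 0" using that assms(6,7) by linarith+
    have "(x+r)\<^sup>2 > (x-1)\<^sup>2" "(x+1)\<^sup>2 > (x-1)\<^sup>2" using assms(2,5) by (intro power_strict_mono; simp)+
    then show "(x+r)\<^sup>2 + s > 0" "(x+1)\<^sup>2 + s > 0" using that assms(6) by linarith+
  qed
  have sign: "Psi_ds d A r x s \<ge> 0 \<longleftrightarrow> vertical_poly R r x s \<ge> 0"
    "Psi_ds d A r x s > 0 \<longleftrightarrow> vertical_poly R r x s > 0" if "s > a" for s
  proof -
    define P where "P = ((x+r)\<^sup>2 + s) * ((x-r)\<^sup>2 + s) * ((x-1)\<^sup>2 + s) * ((x+1)\<^sup>2 + s)"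
    define c where "c = 4*x*d / P"
    have "c > 0" using pos[OF that] assms(1,5) unfolding c_def P_def by simp
    moreover have "Psi_ds d A r x s = c * vertical_poly R r x s"
      using Psi_ds_factor[OF pos[OF that] assms(4)] unfolding c_def P_def by simp
    ultimately show "Psi_ds d A r x s \<ge> 0 \<longleftrightarrow> vertical_poly R r x s \<ge> 0"
      "Psi_ds d A r x s > 0 \<longleftrightarrow> vertical_poly R r x s > 0"
      by (simp_all add: zero_le_mult_iff zero_less_mult_iff)
  qed
  show ?thesis
  proof
    fix s assume "a < s"
    then show "(Psi d A r x has_real_derivative Psi_ds d A r x s) (at s)"
      using pos Psi_has_deriv_s by blast
  next
    fix s t assume st: "a < s" "s < t" "0 \<le> Psi_ds d A r x s"
    then have "vertical_poly R r x s < vertical_poly R r x t"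
      using assms by (intro vertical_poly_increasing) auto
    then show "0 < Psi_ds d A r x t" using sign st by fastforce
  next
    fix s assume far: "r * (x+1)\<^sup>2 / (R - r) + 1 \<le> s"
    have "r * (x+1)\<^sup>2 / (R - r) \<ge> 0" using assms(2,3) by simp
    then have "s > 0" using far by linarith
    have "(R - r) * s \<ge> r * (x+1)\<^sup>2 + (R - r)"
      using far assms(3) by (simp add: field_simps)
    moreover have "R * (x-r)\<^sup>2 \<ge> 0" using assms(2,3) by simp
    ultimately have "R * s - r * s > r * (x+1)\<^sup>2 - R * (x-r)\<^sup>2"
      using assms(3) by (simp add: left_diff_distrib)
    then have "r * ((x+1)\<^sup>2 + s) < R * ((x-r)\<^sup>2 + s)"
      by (simp add: distrib_left)
    moreover have "(x-r)\<^sup>2 + s > 0" "(x-1)\<^sup>2 + s > 0" "(x+r)\<^sup>2 + s > 0" "(x+1)\<^sup>2 + s > 0"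
      using \<open>s > 0\<close> by (simp_all add: add_nonneg_pos)
    ultimately show "Psi d A r x s < 0"
      using assms(1-5) by (intro Psi_neg_far) auto
  qed
qed

section \<open>The real axis: \<open>x \<mapsto> Psi x 0\<close>\<close>

text \<open>For \<open>x > r\<close>, \<open>Psi_dx\<close> has the sign of the quadratic \<open>axis_poly\<close> in \<open>x\<close>.\<close>
definition axis_poly :: "real \<Rightarrow> real \<Rightarrow> real \<Rightarrow> real" where
  "axis_poly R r x = (R - r) * x\<^sup>2 - R * r\<^sup>2 + r"

lemma Psi_dx_factor:
  assumes "r > 1" "x > r" "A = R * d"
  shows "Psi_dx d A r x = 4 * d * axis_poly R r x / ((x\<^sup>2 - r\<^sup>2) * (x\<^sup>2 - 1))"
proof -
  have "x + r \<noteq> 0" "x - r \<noteq> 0" "x - 1 \<noteq> 0" "x + 1 \<noteq> 0" using assms by auto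
  moreover have "x\<^sup>2 - r\<^sup>2 = (x + r) * (x - r)" "x\<^sup>2 - 1 = (x + 1) * (x - 1)"
    by (simp_all add: power2_eq_square algebra_simps)
  ultimately show ?thesis unfolding Psi_dx_def axis_poly_def \<open>A = R * d\<close>
    by (simp add: divide_simps) (simp add: algebra_simps power2_eq_square)
qed

lemma Psi_real_valley:
  assumes "d > 0" "r > 1" "R \<ge> 3 * r" "A = R * d"
  shows "valley (\<lambda>x. Psi d A r x 0) (Psi_dx d A r) r (3 * r + 2)"
proof -
  have sign: "Psi_dx d A r x \<ge> 0 \<longleftrightarrow> axis_poly R r x \<ge> 0"
    "Psi_dx d A r x > 0 \<longleftrightarrow> axis_poly R r x > 0" if "x > r" for x
  proof -
    have "x\<^sup>2 > r\<^sup>2" "x\<^sup>2 > 1" using that assms(2) by (auto intro: power_strict_mono one_less_power)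
    define c where "c = 4 * d / ((x\<^sup>2 - r\<^sup>2) * (x\<^sup>2 - 1))"
    have "c > 0" using \<open>x\<^sup>2 > r\<^sup>2\<close> \<open>x\<^sup>2 > 1\<close> assms(1) unfolding c_def by simp
    moreover have "Psi_dx d A r x = c * axis_poly R r x"
      using Psi_dx_factor[OF assms(2) that assms(4)] unfolding c_def by simp
    ultimately show "Psi_dx d A r x \<ge> 0 \<longleftrightarrow> axis_poly R r x \<ge> 0"
      "Psi_dx d A r x > 0 \<longleftrightarrow> axis_poly R r x > 0"
      by (simp_all add: zero_le_mult_iff zero_less_mult_iff)
  qed
  show ?thesis
  proof
    fix x assume "r < x"
    then show "((\<lambda>x. Psi d A r x 0) has_real_derivative Psi_dx d A r x) (at x)"
      using assms(2) by (intro Psi_has_deriv_x) auto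
  next
    fix s t assume st: "r < s" "s < t" "0 \<le> Psi_dx d A r s"
    have "s\<^sup>2 < t\<^sup>2" using st assms(2) by (intro power_strict_mono) auto
    then have "axis_poly R r s < axis_poly R r t"
      using assms(2,3) unfolding axis_poly_def by simp
    then show "0 < Psi_dx d A r t" using sign st by fastforce
  next
    fix x assume far: "3 * r + 2 \<le> x"
    have "x + 1 \<le> 3/2 * (x - r)" "x - r > 0" using far assms(2) by (simp_all add: algebra_simps)
    then have "(x + 1)\<^sup>2 \<le> (3/2 * (x - r))\<^sup>2" using far assms(2) by (intro power_mono) auto
    also have "(3/2 * (x - r))\<^sup>2 = 9/4 * (x - r)\<^sup>2" unfolding power_mult_distrib by (simp add: power_divide)
    finally have "r * (x + 1)\<^sup>2 \<le> r * (9/4 * (x - r)\<^sup>2)"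
      using assms(2) by (intro mult_left_mono) auto
    also have "\<dots> < 3 * r * (x - r)\<^sup>2" using assms(2) \<open>x - r > 0\<close> by simp
    also have "\<dots> \<le> R * (x - r)\<^sup>2" using assms(3) by (simp add: mult_right_mono)
    finally have "r * ((x + 1)\<^sup>2 + 0) < R * ((x - r)\<^sup>2 + 0)" by simp
    moreover have "(x-r)\<^sup>2 + 0 > 0" "(x-1)\<^sup>2 + 0 > 0" "(x+r)\<^sup>2 + 0 > 0" "(x+1)\<^sup>2 + 0 > 0"
      using far assms(2) by auto
    ultimately show "Psi d A r x 0 < 0"
      using assms far by (intro Psi_neg_far) auto
  qed
qed

text \<open>On \<open>(1,r)\<close> every term of \<open>Psi_dx\<close> is positive, so \<open>x \<mapsto> Psi x 0\<close> is increasing there.\<close>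
lemma Psi_real_increasing:
  assumes "d > 0" "A > 0" "r > 1" "1 < u" "u < v" "v < r"
  shows "Psi d A r u 0 < Psi d A r v 0"
proof (rule DERIV_pos_imp_increasing[OF assms(5)])
  fix x assume x: "u \<le> x" "x \<le> v"
  have "2 * d / (x + r) > 0" "2 * d / (x - r) < 0" using assms x by (auto simp: divide_pos_neg)
  moreover have "2 / (x - 1) > 2 / (x + 1)" using assms x by (simp add: frac_less2)
  then have "A * (2 / (x - 1) - 2 / (x + 1)) > 0" using assms(2) by simp
  ultimately have "Psi_dx d A r x > 0" unfolding Psi_dx_def by linarith
  moreover have "((\<lambda>x. Psi d A r x 0) has_real_derivative Psi_dx d A r x) (at x)"
    using assms x by (intro Psi_has_deriv_x) auto
  ultimately show "\<exists>y. ((\<lambda>x. Psi d A r x 0) has_real_derivative y) (at x) \<and> 0 < y" by blast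
qed

lemma Psi_real_sign:
  assumes "d > 0" "r > 1" "R \<ge> 3 * r" "A = R * d"
    and "1 < x0" "x0 < r" "Psi d A r x0 0 = 0" "r < x1" "Psi d A r x1 0 = 0"
    and "1 < x" "x \<noteq> r"
  shows "Psi d A r x 0 \<ge> 0 \<longleftrightarrow> x0 \<le> x \<and> x \<le> x1"
proof (cases "x < r")
  case True
  have "A > 0" using assms(1-4) by simp
  with True assms show ?thesis
    using Psi_real_increasing[of d A r x0 x] Psi_real_increasing[of d A r x x0]
    by (cases x0 x rule: linorder_cases) auto
next
  case False
  interpret axis: valley "\<lambda>x. Psi d A r x 0" "Psi_dx d A r" r "3 * r + 2"
    using Psi_real_valley assms(1-4) .
  from False assms show ?thesis
    using axis.pos_before_zero[of x x1] axis.neg_after_nonpos[of x1 x]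
    by (cases x x1 rule: linorder_cases) auto
qed

text \<open>At \<open>x = r\<close> the vertical line starts at a logarithmic pole: \<open>Psi r s \<rightarrow> +\<infinity>\<close> as
  \<open>s \<rightarrow> 0\<^sup>+\<close>, since \<open>-d ln s\<close> dominates while the \<open>A\<close>-term stays bounded.\<close>
lemma Psi_at_r_pos:
  assumes "d > 0" "r > 1" "A \<ge> 0"
  obtains p where "p > 0" "Psi d A r r p > 0"
proof -
  define K where "K = 4 * r * A / (r - 1)\<^sup>2"
  define p where "p = 4 * r\<^sup>2 * exp (- (K / d + 1))"
  have "p > 0" "4 * r\<^sup>2 > 0" using assms(2) unfolding p_def by simp_all
  then have "ln (4 * r\<^sup>2 + p) \<ge> ln (4 * r\<^sup>2)" by (subst ln_le_cancel_iff) (auto intro: add_pos_pos)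
  moreover have "ln p = ln (4 * r\<^sup>2) - (K / d + 1)"
    unfolding p_def using \<open>4 * r\<^sup>2 > 0\<close> by (simp add: ln_mult)
  ultimately have "d * (ln (4 * r\<^sup>2 + p) - ln p) \<ge> d * (K / d + 1)"
    using assms(1) by (intro mult_left_mono) auto
  moreover have "d * (K / d + 1) = K + d" using assms(1) by (simp add: field_simps)
  ultimately have pole: "d * (ln (4 * r\<^sup>2 + p) - ln p) \<ge> K + d" by linarith
  define p3 p4 where "p3 = (r - 1)\<^sup>2 + p" and "p4 = (r + 1)\<^sup>2 + p"
  have "p3 > 0" "p4 > 0" using \<open>p > 0\<close> unfolding p3_def p4_def by (simp_all add: add_nonneg_pos)
  have "ln p4 - ln p3 \<le> (p4 - p3) / p3" using ln_diff_le \<open>p4 > 0\<close> \<open>p3 > 0\<close> .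
  also have "\<dots> = 4 * r / p3" unfolding p3_def p4_def by (simp add: power2_eq_square algebra_simps)
  also have "\<dots> \<le> 4 * r / (r - 1)\<^sup>2"
    using assms(2) \<open>p > 0\<close> unfolding p3_def by (intro divide_left_mono) (auto intro!: mult_pos_pos add_pos_pos)
  finally have "A * (ln p4 - ln p3) \<le> A * (4 * r / (r - 1)\<^sup>2)"
    using assms(3) by (rule mult_left_mono)
  also have "\<dots> = K" unfolding K_def by simp
  finally have "A * (ln p4 - ln p3) \<le> K" .
  moreover have "Psi d A r r p = d * (ln (4 * r\<^sup>2 + p) - ln p) - A * (ln p4 - ln p3)"
    unfolding Psi_def p3_def p4_def by (simp add: algebra_simps power2_eq_square)
  ultimately have "Psi d A r r p > 0" using pole assms(1) by linarith
  with \<open>p > 0\<close> show ?thesis using that by blast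
qed

lemma Psi_line_valley:
  assumes "d > 0" "r > 1" "R > r" "A = R * d" "x > 1"
  obtains a0 B where "valley (Psi d A r x) (Psi_ds d A r x) a0 B" "a0 \<le> 0"
    and "\<And>s. 0 \<le> s \<Longrightarrow> (x, s) \<noteq> (r, 0) \<Longrightarrow> a0 < s"
proof -
  define a0 where "a0 = - min ((x-1)\<^sup>2) ((x-r)\<^sup>2) / 2"
  have "0 \<le> min ((x-1)\<^sup>2) ((x-r)\<^sup>2)" "min ((x-1)\<^sup>2) ((x-r)\<^sup>2) \<le> (x-1)\<^sup>2"
    "min ((x-1)\<^sup>2) ((x-r)\<^sup>2) \<le> (x-r)\<^sup>2" by simp_all
  then have "a0 \<ge> - ((x-1)\<^sup>2)" "a0 \<ge> - ((x-r)\<^sup>2)" "a0 \<le> 0" unfolding a0_def by linarith+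
  moreover have "a0 < s" if "0 \<le> s" "(x, s) \<noteq> (r, 0)" for s
  proof (cases "x = r")
    case False
    then have "min ((x-1)\<^sup>2) ((x-r)\<^sup>2) > 0" using assms(5) by simp
    with that(1) show ?thesis unfolding a0_def by linarith
  next
    case True
    with that have "s > 0" by simp
    with \<open>a0 \<le> 0\<close> show ?thesis by simp
  qed
  ultimately show ?thesis using that Psi_vertical_valley[OF assms] by blast
qed

lemma Psi_line_crossing:
  assumes "d > 0" "r > 1" "R > r" "A = R * d" "x > 1"
    and start: "x = r \<or> Psi d A r x 0 \<ge> 0"
  obtains yx where "yx \<ge> 0" "(x, yx) \<noteq> (r, 0)" "Psi d A r x (yx\<^sup>2) = 0"
    and "\<And>y. y \<ge> 0 \<Longrightarrow> (x, y) \<noteq> (r, 0) \<Longrightarrow> Psi d A r x (y\<^sup>2) = 0 \<Longrightarrow> y = yx"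
    and "\<And>y. 0 < y \<Longrightarrow> y < yx \<Longrightarrow> Psi d A r x (y\<^sup>2) > 0"
    and "\<And>y. yx < y \<Longrightarrow> Psi d A r x (y\<^sup>2) < 0"
proof -
  obtain a0 B where "valley (Psi d A r x) (Psi_ds d A r x) a0 B" "a0 \<le> 0"
    and admissible: "\<And>s. 0 \<le> s \<Longrightarrow> (x, s) \<noteq> (r, 0) \<Longrightarrow> a0 < s"
    using Psi_line_valley[OF assms(1-5)] by blast
  then interpret line: valley "Psi d A r x" "Psi_ds d A r x" a0 B by simp
  obtain p where p: "0 \<le> p" "(x, p) \<noteq> (r, 0)" "Psi d A r x p \<ge> 0"
  proof (cases "x = r")
    case True
    obtain q where "q > 0" "Psi d A r r q > 0"
      using Psi_at_r_pos[of d r A] assms(1-4) by auto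
    with True show ?thesis using that[of q] by simp
  next
    case False
    then show ?thesis using start that[of 0] by simp
  qed
  then obtain t where t: "p \<le> t" "Psi d A r x t = 0"
    using line.zero_after_nonneg[of p] admissible by blast
  with p have "0 \<le> t" "(x, t) \<noteq> (r, 0)" by auto
  note profile = line.square_profile[OF \<open>a0 \<le> 0\<close> admissible[OF this] \<open>0 \<le> t\<close> t(2)]
  show ?thesis
  proof (rule that[of "sqrt t"])
    show "sqrt t \<ge> 0" "(x, sqrt t) \<noteq> (r, 0)" "Psi d A r x ((sqrt t)\<^sup>2) = 0"
      using \<open>0 \<le> t\<close> \<open>(x, t) \<noteq> (r, 0)\<close> t(2) by auto
  next
    fix y assume "y \<ge> 0" "(x, y) \<noteq> (r, 0)" "Psi d A r x (y\<^sup>2) = 0"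
    moreover from \<open>(x, y) \<noteq> (r, 0)\<close> have "(x, y\<^sup>2) \<noteq> (r, 0)" by auto
    ultimately show "y = sqrt t" using profile(1) admissible[of "y\<^sup>2"] by simp
  next
    show "Psi d A r x (y\<^sup>2) > 0" if "0 < y" "y < sqrt t" for y using profile(2) that by blast
    show "Psi d A r x (y\<^sup>2) < 0" if "sqrt t < y" for y using profile(3) that by blast
  qed
qed

lemma Psi_line_negative:
  assumes "d > 0" "r > 1" "R > r" "A = R * d" "x > 1"
    and "x \<noteq> r" "Psi d A r x 0 < 0" "y \<ge> 0"
  shows "Psi d A r x (y\<^sup>2) < 0"
proof -
  obtain a0 B where "valley (Psi d A r x) (Psi_ds d A r x) a0 B"
    and admissible: "\<And>s. 0 \<le> s \<Longrightarrow> (x, s) \<noteq> (r, 0) \<Longrightarrow> a0 < s"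
    using Psi_line_valley[OF assms(1-5)] by blast
  then interpret line: valley "Psi d A r x" "Psi_ds d A r x" a0 B by simp
  show ?thesis
    using line.neg_after_nonpos[of 0 "y\<^sup>2"] admissible[of 0] assms(6-8) by (cases "y = 0") auto
qed

theorem lemma4p8:
  fixes d a b :: nat and r R x0 x1 x :: real
  assumes "d > 0" and "a > 0" and "b > 0"
    and r_def: "r = (real d + 2 * real b) / real d"
    and R_def: "R = (real a + real d) / real d"
    and "R \<ge> 3 * r"
    and x0: "1 < x0" "x0 < r" "Phi d a r (complex_of_real x0) = 0"
    and x1: "r < x1" "Phi d a r (complex_of_real x1) = 0"
    and x: "1 < x"
  shows "(x0 \<le> x \<and> x \<le> x1 \<longrightarrow>
           (\<exists>yx. yx \<ge> 0 \<and> Complex x yx \<noteq> complex_of_real r \<and> Phi d a r (Complex x yx) = 0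
              \<and> (\<forall>y. y \<ge> 0 \<and> Complex x y \<noteq> complex_of_real r \<and> Phi d a r (Complex x y) = 0 \<longrightarrow> y = yx)
              \<and> (\<forall>y. 0 < y \<and> y < yx \<longrightarrow> Phi d a r (Complex x y) > 0)
              \<and> (\<forall>y. y > yx \<longrightarrow> Phi d a r (Complex x y) < 0)))
       \<and> (\<not> (x0 \<le> x \<and> x \<le> x1) \<longrightarrow> (\<forall>y. y \<ge> 0 \<longrightarrow> Phi d a r (Complex x y) < 0))"
proof -
  define A where "A = real a + real d"
  have r: "r > 1" using assms(1,3) unfolding r_def by (simp add: field_simps)
  have A: "A = R * d" unfolding A_def R_def using assms(1) by simp
  have line: "real d > 0" "r > 1" "R > r" "A = R * d" "x > 1" using assms(1,6) r A x by auto
  have Phi_Psi: "Phi d a r (Complex u y) = Psi d A r u (y\<^sup>2) / 2" for u y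
    unfolding Phi_eq_Psi A_def by (simp add: add.commute)
  have off_pole: "Complex x y \<noteq> complex_of_real r \<longleftrightarrow> (x, y) \<noteq> (r, 0)" for y
    by (auto simp: complex_eq_iff)
  have on_axis: "complex_of_real u = Complex u 0" for u by (simp add: complex_eq_iff)
  have "Psi d A r x0 0 = 0" "Psi d A r x1 0 = 0"
    using x0(3) x1(2) unfolding on_axis Phi_Psi by simp_all
  then have axis_sign: "x \<noteq> r \<Longrightarrow> Psi d A r x 0 \<ge> 0 \<longleftrightarrow> x0 \<le> x \<and> x \<le> x1"
    using Psi_real_sign[of d r R A x0 x1 x] assms(1,6) r A x0(1,2) x1(1) x by simp
  show ?thesis
  proof (intro conjI impI)
    assume "x0 \<le> x \<and> x \<le> x1"
    then have "x = r \<or> Psi d A r x 0 \<ge> 0" using axis_sign by blast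
    then obtain yx where yx: "yx \<ge> 0" "(x, yx) \<noteq> (r, 0)" "Psi d A r x (yx\<^sup>2) = 0"
      and unique: "\<And>y. y \<ge> 0 \<Longrightarrow> (x, y) \<noteq> (r, 0) \<Longrightarrow> Psi d A r x (y\<^sup>2) = 0 \<Longrightarrow> y = yx"
      and below: "\<And>y. 0 < y \<Longrightarrow> y < yx \<Longrightarrow> Psi d A r x (y\<^sup>2) > 0"
      and above: "\<And>y. yx < y \<Longrightarrow> Psi d A r x (y\<^sup>2) < 0"
      using Psi_line_crossing[OF line] by blast
    show "\<exists>yx. yx \<ge> 0 \<and> Complex x yx \<noteq> complex_of_real r \<and> Phi d a r (Complex x yx) = 0
              \<and> (\<forall>y. y \<ge> 0 \<and> Complex x y \<noteq> complex_of_real r \<and> Phi d a r (Complex x y) = 0 \<longrightarrow> y = yx)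
              \<and> (\<forall>y. 0 < y \<and> y < yx \<longrightarrow> Phi d a r (Complex x y) > 0)
              \<and> (\<forall>y. y > yx \<longrightarrow> Phi d a r (Complex x y) < 0)"
      unfolding Phi_Psi off_pole
    proof (intro exI[of _ yx] conjI allI impI)
      show "0 \<le> yx" "(x, yx) \<noteq> (r, 0)" using yx(1,2) .
      show "Psi d A r x (yx\<^sup>2) / 2 = 0" using yx(3) by simp
      fix y
      show "y = yx" if "0 \<le> y \<and> (x, y) \<noteq> (r, 0) \<and> Psi d A r x (y\<^sup>2) / 2 = 0"
        using unique that by simp
      show "Psi d A r x (y\<^sup>2) / 2 > 0" if "0 < y \<and> y < yx" using below that by simp
      show "Psi d A r x (y\<^sup>2) / 2 < 0" if "yx < y" using above that by simp
    qed
  next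
    assume outside: "\<not> (x0 \<le> x \<and> x \<le> x1)"
    then have "x \<noteq> r" using x0 x1 by auto
    with outside have "Psi d A r x 0 < 0" using axis_sign by auto
    then show "\<forall>y\<ge>0. Phi d a r (Complex x y) < 0"
      using Psi_line_negative[OF line \<open>x \<noteq> r\<close>] unfolding Phi_Psi by simp
  qed
qed

end
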